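(* Consider the following two-message protocol between Alice and Bob, in which Bob follows the protocol honestly and Alice may deviate arbitrarily. Alice prepares an arbitrary (possibly mixed) state $\rho$ on $A\otimes B_1\otimes B_2$, where $B_1,B_2$ are qubits and $A$ is a finite-dimensional system that Alice keeps (for instance a purifying system), and sends the qubits $B_1B_2$ to Bob. Bob chooses independent, uniformly random bits $y,h_1,h_2,p$. If $y=0$ he applies ${\sf CNOT}$ to $B_1B_2$ with $B_1$ as control; then for $j=1,2$ he applies $\sigma_y$ to $B_j$ if $h_j=1$; then, if $p=1$, he applies $\sigma_z\otimes\sigma_z$ to $B_1B_2$. He returns $B_1B_2$ to Alice. Let $r:=h_1\oplus h_2$ (Bob's output bit). Let $\mathcal M$ be any measurement (POVM) that Alice performs on $A\otimes B_1\otimes B_2$ after receiving the qubits, with outcome $O$. Define $I^{\mathcal M}_y:=I(y;O)$, $I^{\mathcal M}_r:=I(r;O)$ and $I^{\mathcal M}_{y\oplus r}:=I(y\oplus r;O)$ (classical mutual informations, with $y$ uniformly distributed). Then, for every such $\rho$ and every such $\mathcal M$ (the same $\rho$ and $\mathcal M$ in each inequality), $$I^{\mathcal M}_y+I^{\mathcal M}_r\le 1,\qquad I^{\mathcal M}_y+I^{\mathcal M}_{y\oplus r}\le 1,\qquad I^{\mathcal M}_y+\max\bigl(I^{\mathcal M}_r,I^{\mathcal M}_{y\oplus r}\bigr)\le 1 .$$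
   Context: This is the setting of the paper's "Protocol 1" for generating a one-time table (classical correlation with inputs $x$ for Alice, $y$ for Bob and outputs $(x\cdot y)\oplus r$ for Alice, $r$ for Bob). In the honest protocol Alice, with random bits $x,s,t$, prepares $|x\rangle|t\rangle$ if $s=0$ or $|\tilde t\rangle|\tilde x\rangle$ if $s=1$ (where $|\tilde 0\rangle=|+\rangle$, $|\tilde 1\rangle=|-\rangle$), and after receiving the qubits back measures them in the $Z$ basis if $s=0$ or the $X$ basis if $s=1$, outputting the XOR of the two outcomes and $t$; the proposition allows Alice to send an arbitrary state instead. Mutual informations are measured in bits. *)

theory Defs
  imports Complex_Main "Jordan_Normal_Form.Matrix"
begin

definition adjoint :: "complex mat \<Rightarrow> complex mat" where
  "adjoint A = mat (dim_col A) (dim_row A) (\<lambda>(i,j). cnj (A $$ (j,i)))"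

definition mtrace :: "complex mat \<Rightarrow> complex" where
  "mtrace A = (\<Sum>i<dim_row A. A $$ (i,i))"

definition psd :: "nat \<Rightarrow> complex mat \<Rightarrow> bool" where
  "psd n A \<longleftrightarrow> A \<in> carrier_mat n n \<and> adjoint A = A \<and>
     (\<forall>v :: nat \<Rightarrow> complex.
        0 \<le> Re (\<Sum>i<n. \<Sum>j<n. cnj (v i) * A $$ (i,j) * v j))"

definition density :: "nat \<Rightarrow> complex mat \<Rightarrow> bool" where
  "density n \<rho> \<longleftrightarrow> psd n \<rho> \<and> mtrace \<rho> = 1"

definition povm :: "nat \<Rightarrow> complex mat list \<Rightarrow> bool" where
  "povm n Ms \<longleftrightarrow> (\<forall>k<length Ms. psd n (Ms ! k)) \<and>
     (\<forall>i<n. \<forall>j<n. (\<Sum>k<length Ms. (Ms ! k) $$ (i,j)) = (if i = j then 1 else 0))"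

text \<open>Kronecker (tensor) product; the first factor is the most significant index.\<close>
definition kron :: "complex mat \<Rightarrow> complex mat \<Rightarrow> complex mat" where
  "kron A B = mat (dim_row A * dim_row B) (dim_col A * dim_col B)
     (\<lambda>(i,j). A $$ (i div dim_row B, j div dim_col B) * B $$ (i mod dim_row B, j mod dim_col B))"

section \<open>Gates on the two qubits B1 B2 (basis index 2*b1 + b2)\<close>

definition sigma_y :: "complex mat" where
  "sigma_y = mat_of_rows_list 2 [[0, -\<i>], [\<i>, 0]]"

definition sigma_z :: "complex mat" where
  "sigma_z = mat_of_rows_list 2 [[1, 0], [0, -1]]"

definition id2 :: "complex mat" where
  "id2 = 1\<^sub>m 2"

text \<open>CNOT with B1 as control: |b1,b2> maps to |b1, b1 xor b2>.\<close>
definition cnot :: "complex mat" where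
  "cnot = mat_of_rows_list 4 [[1,0,0,0],[0,1,0,0],[0,0,0,1],[0,0,1,0]]"

text \<open>Bob's unitary on B1 B2 for bits y, h1, h2, p (bits as booleans, True = 1).\<close>
definition bob_unitary :: "bool \<Rightarrow> bool \<Rightarrow> bool \<Rightarrow> bool \<Rightarrow> complex mat" where
  "bob_unitary y h1 h2 p =
     (if p then kron sigma_z sigma_z else 1\<^sub>m 4) *
     kron (if h1 then sigma_y else id2) (if h2 then sigma_y else id2) *
     (if \<not> y then cnot else 1\<^sub>m 4)"

definition joint_prob ::
  "nat \<Rightarrow> complex mat \<Rightarrow> complex mat list \<Rightarrow> bool \<times> bool \<times> bool \<times> bool \<Rightarrow> nat \<Rightarrow> real" where
  "joint_prob dA \<rho> Ms \<omega> out =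
     (case \<omega> of (y, h1, h2, p) \<Rightarrow>
       (let V = kron (1\<^sub>m dA) (bob_unitary y h1 h2 p)
        in (1/16) * Re (mtrace ((Ms ! out) * (V * \<rho> * adjoint V)))))"

definition stat_joint ::
  "nat \<Rightarrow> complex mat \<Rightarrow> complex mat list \<Rightarrow> (bool \<times> bool \<times> bool \<times> bool \<Rightarrow> 'x) \<Rightarrow> 'x \<Rightarrow> nat \<Rightarrow> real" where
  "stat_joint dA \<rho> Ms f x out = (\<Sum>\<omega>\<in>{\<omega>. f \<omega> = x}. joint_prob dA \<rho> Ms \<omega> out)"

definition mutual_info :: "'x set \<Rightarrow> 'o set \<Rightarrow> ('x \<Rightarrow> 'o \<Rightarrow> real) \<Rightarrow> real" where
  "mutual_info X Os P =
     (\<Sum>x\<in>X. \<Sum>out\<in>Os.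
        (let pxo = P x out; px = (\<Sum>o'\<in>Os. P x o'); po = (\<Sum>x'\<in>X. P x' out)
         in if pxo = 0 then 0 else pxo * log 2 (pxo / (px * po))))"

definition info_of ::
  "nat \<Rightarrow> complex mat \<Rightarrow> complex mat list \<Rightarrow> (bool \<times> bool \<times> bool \<times> bool \<Rightarrow> bool) \<Rightarrow> real" where
  "info_of dA \<rho> Ms f = mutual_info (UNIV :: bool set) {..<length Ms} (stat_joint dA \<rho> Ms f)"

definition bit_y :: "bool \<times> bool \<times> bool \<times> bool \<Rightarrow> bool" where
  "bit_y \<omega> = (case \<omega> of (y, h1, h2, p) \<Rightarrow> y)"

definition bit_r :: "bool \<times> bool \<times> bool \<times> bool \<Rightarrow> bool" where
  "bit_r \<omega> = (case \<omega> of (y, h1, h2, p) \<Rightarrow> h1 \<noteq> h2)"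

definition bit_y_xor_r :: "bool \<times> bool \<times> bool \<times> bool \<Rightarrow> bool" where
  "bit_y_xor_r \<omega> = (case \<omega> of (y, h1, h2, p) \<Rightarrow> y \<noteq> (h1 \<noteq> h2))"

end

(* Fix an outcome of Alice's measurement and let A_y be its weight given Bob's bit y, and B_y the same
   weight counted with sign (-1)^(h1 + h2). Averaging Bob's conjugations over h1, h2, p expresses
   2 A_0 and 2 A_1 as sums of values of a positive semidefinite form, sharing one summand, and 2 B_0
   and 2 B_1 as the matching cross terms; Cauchy-Schwarz gives (B_0 +- B_1)^2 <= 4 A_0 A_1.
   Since binary entropy dominates 4 p (1 - p), the information a uniform bit leaks through an outcome
   is at most its squared bias divided by the outcome probability, and the inequality above says that
   the biases of y and of r (or of y xor r) together stay below that probability. *)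

theory Submission
  imports Defs "HOL-Analysis.Convex"
begin

section \<open>Mutual information of a uniform bit\<close>

lemma convex_on_neg_ln_div_one_minus: "convex_on {0<..<1} (\<lambda>p::real. - ln p / (1 - p))"
proof (rule f''_ge0_imp_convex)
  have numerator_nonneg: "0 \<le> (1-p)^2/p^2 - 2*(1-p)/p - 2*ln p" if "0 < p" "p \<le> 1" for p :: real
  proof -
    let ?N = "\<lambda>p::real. (1-p)^2/p^2 - 2*(1-p)/p - 2*ln p"
    have "?N 1 \<le> ?N p"
    proof (rule DERIV_nonpos_imp_nonincreasing[of p 1 ?N])
      fix x assume "p \<le> x" "x \<le> 1"
      then have "0 < x" using that by simp
      have "(?N has_real_derivative (-2*(1-x)^2/x^3)) (at x)"
        using \<open>0 < x\<close> by (auto intro!: derivative_eq_intros) (simp add: field_simps eval_nat_numeral)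
      then show "\<exists>y. DERIV ?N x :> y \<and> y \<le> 0"
        using \<open>0 < x\<close> by (intro exI[of _ "-2*(1-x)^2/x^3"]) (auto simp: divide_nonneg_pos)
    qed (use that in simp)
    then show ?thesis by simp
  qed
  show "convex {0<..<1::real}" by simp
  fix x :: real assume x: "x \<in> {0<..<1}"
  then have x1: "1 - x \<noteq> 0" "x \<noteq> 0" "x \<noteq> 1" by auto
  show "((\<lambda>p. - ln p / (1-p)) has_real_derivative (- 1/(x*(1-x)) - ln x/(1-x)^2)) (at x)"
    using x by (auto intro!: derivative_eq_intros) (use x1 in \<open>simp add: divide_simps power2_eq_square\<close>)
  show "((\<lambda>x. - 1/(x*(1-x)) - ln x/(1-x)^2) has_real_derivative
          (((1-x)^2/x^2 - 2*(1-x)/x - 2*ln x)/(1-x)^3)) (at x)"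
    using x by (auto intro!: derivative_eq_intros)
      (use x1 in \<open>simp add: divide_simps, simp add: algebra_simps eval_nat_numeral\<close>)
  show "0 \<le> ((1-x)^2/x^2 - 2*(1-x)/x - 2*ln x)/(1-x)^3"
    using x numerator_nonneg[of x] by auto
qed

lemma binary_entropy_ge_four_mult:
  fixes p :: real
  assumes "0 < p" "p < 1"
  shows "4 * p * (1 - p) * ln 2 \<le> - p * ln p - (1 - p) * ln (1 - p)"
proof -
  have halve_le: "2 * l \<le> (1/2) * x \<Longrightarrow> 4 * l \<le> x" for l x :: real
    by linarith
  let ?a = "\<lambda>p::real. - ln p / (1 - p)"
  have "?a ((1 - 1/2) *\<^sub>R p + (1/2) *\<^sub>R (1 - p)) \<le> (1 - 1/2) * ?a p + (1/2) * ?a (1 - p)"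
    by (rule convex_onD[OF convex_on_neg_ln_div_one_minus]) (use assms in auto)
  moreover have "(1 - 1/2) *\<^sub>R p + (1/2) *\<^sub>R (1 - p) = (1/2 :: real)"
    by (simp add: field_simps)
  moreover have "?a (1/2) = 2 * ln 2"
    by (simp add: ln_div)
  ultimately have "2 * ln 2 \<le> (1/2) * (?a p + ?a (1 - p))"
    by (simp only: distrib_left) simp
  then have "4 * ln 2 \<le> ?a p + ?a (1 - p)"
    by (rule halve_le)
  then have "p * (1 - p) * (4 * ln 2) \<le> p * (1 - p) * (?a p + ?a (1 - p))"
    using assms by (intro mult_left_mono) auto
  also have "\<dots> = - p * ln p - (1 - p) * ln (1 - p)"
    using assms by (simp add: field_simps)
  finally show ?thesis
    by (simp add: algebra_simps)
qed

definition chi_sq :: "real \<Rightarrow> real \<Rightarrow> real" where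
  "chi_sq a b = (if a + b = 0 then 0 else (a - b)^2 / (a + b))"

lemma mutual_info_term_le_chi_sq:
  fixes a b :: real
  assumes "0 \<le> a" "0 \<le> b"
  shows "(if a = 0 then 0 else a * log 2 (a / ((1/2) * (a + b)))) +
         (if b = 0 then 0 else b * log 2 (b / ((1/2) * (a + b)))) \<le> chi_sq a b"
proof (cases "a = 0 \<or> b = 0")
  case True
  with assms show ?thesis
    by (auto simp: chi_sq_def power2_eq_square)
next
  case False
  with assms have "0 < a" "0 < b" by auto
  define s where "s = a + b"
  define p where "p = a / s"
  have "0 < s" "0 < p" "p < 1"
    using \<open>0 < a\<close> \<open>0 < b\<close> by (auto simp: p_def s_def)
  have a: "a = s * p" and b: "b = s * (1 - p)"
    using \<open>0 < s\<close> by (auto simp: p_def s_def field_simps)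
  have "a * log 2 (2 * p) + b * log 2 (2 * (1 - p)) =
        s * (1 + (p * ln p + (1 - p) * ln (1 - p)) / ln 2)"
  proof -
    have "ln (2 * (1 - p)) = ln 2 + ln (1 - p)"
      using \<open>p < 1\<close> by (intro ln_mult_pos) auto
    then have "log 2 (2 * p) = 1 + ln p / ln 2" "log 2 (2 * (1 - p)) = 1 + ln (1 - p) / ln 2"
      using \<open>0 < p\<close> by (simp_all add: log_def ln_mult add_divide_distrib)
    then show ?thesis
      unfolding a b by (simp add: field_simps)
  qed
  also have "\<dots> \<le> s * (1 - 4 * p * (1 - p))"
    using binary_entropy_ge_four_mult[OF \<open>0 < p\<close> \<open>p < 1\<close>] \<open>0 < s\<close>
    by (intro mult_left_mono) (simp_all add: field_simps)
  also have "\<dots> = chi_sq a b"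
    using \<open>0 < s\<close> unfolding chi_sq_def a b
    by (simp add: field_simps power2_eq_square)
  finally have "a * log 2 (2 * p) + b * log 2 (2 * (1 - p)) \<le> chi_sq a b" .
  moreover have "a / ((1/2) * (a + b)) = 2 * p" "b / ((1/2) * (a + b)) = 2 * (1 - p)"
    using \<open>0 < s\<close> by (simp_all add: p_def s_def field_simps)
  ultimately show ?thesis
    using False by simp
qed

lemma mutual_info_uniform_bit_le_chi_sq:
  fixes P :: "bool \<Rightarrow> 'o \<Rightarrow> real"
  assumes nonneg: "\<And>x out. out \<in> Os \<Longrightarrow> 0 \<le> P x out"
    and uniform: "\<And>x. (\<Sum>out\<in>Os. P x out) = 1/2"
  shows "mutual_info UNIV Os P \<le> (\<Sum>out\<in>Os. chi_sq (P True out) (P False out))"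
proof -
  define contrib where "contrib = (\<lambda>a po::real. if a = 0 then 0 else a * log 2 (a / ((1/2) * po)))"
  have "mutual_info UNIV Os P = (\<Sum>x\<in>UNIV. \<Sum>out\<in>Os. contrib (P x out) (P True out + P False out))"
  proof -
    have outcome_prob: "(\<Sum>x\<in>UNIV. P x out) = P True out + P False out" for out
      by (simp add: UNIV_bool)
    show ?thesis
      unfolding mutual_info_def contrib_def Let_def uniform outcome_prob ..
  qed
  also have "\<dots> = (\<Sum>out\<in>Os. contrib (P True out) (P True out + P False out) + contrib (P False out) (P True out + P False out))"
    by (simp add: UNIV_bool sum.distrib)
  also have "\<dots> \<le> (\<Sum>out\<in>Os. chi_sq (P True out) (P False out))"
    using mutual_info_term_le_chi_sq nonneg unfolding contrib_def by (intro sum_mono) simp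
  finally show ?thesis .
qed

lemma chi_sq_add_le:
  fixes a b c d :: real
  assumes "0 \<le> a" "0 \<le> b" "c + d = a + b" "(a - b)^2 + (c - d)^2 \<le> (a + b)^2"
  shows "chi_sq a b + chi_sq c d \<le> a + b"
proof (cases "a + b = 0")
  case False
  with assms have "0 < a + b" by simp
  have "chi_sq a b + chi_sq c d = ((a - b)^2 + (c - d)^2) / (a + b)"
    using assms(3) False by (simp add: chi_sq_def add_divide_distrib)
  also have "\<dots> \<le> (a + b)^2 / (a + b)"
    using assms(4) \<open>0 < a + b\<close> by (intro divide_right_mono) auto
  also have "\<dots> = a + b"
    by (simp add: power2_eq_square)
  finally show ?thesis .
qed (use assms in \<open>simp add: chi_sq_def\<close>)

lemma mutual_info_pair_le_one:
  fixes P Q :: "bool \<Rightarrow> 'o \<Rightarrow> real"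
  assumes "\<And>x out. out \<in> Os \<Longrightarrow> 0 \<le> P x out" "\<And>x. (\<Sum>out\<in>Os. P x out) = 1/2"
    and "\<And>x out. out \<in> Os \<Longrightarrow> 0 \<le> Q x out" "\<And>x. (\<Sum>out\<in>Os. Q x out) = 1/2"
    and "\<And>out. out \<in> Os \<Longrightarrow> Q True out + Q False out = P True out + P False out"
    and "\<And>out. out \<in> Os \<Longrightarrow>
      (P True out - P False out)^2 + (Q True out - Q False out)^2 \<le> (P True out + P False out)^2"
  shows "mutual_info UNIV Os P + mutual_info UNIV Os Q \<le> 1"
proof -
  have "mutual_info UNIV Os P + mutual_info UNIV Os Q \<le>
        (\<Sum>out\<in>Os. chi_sq (P True out) (P False out) + chi_sq (Q True out) (Q False out))"
    using mutual_info_uniform_bit_le_chi_sq[of Os P] mutual_info_uniform_bit_le_chi_sq[of Os Q] assms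
    by (simp add: sum.distrib)
  also have "\<dots> \<le> (\<Sum>out\<in>Os. P True out + P False out)"
    using assms by (intro sum_mono chi_sq_add_le) auto
  also have "\<dots> = 1"
    using assms(2)[of True] assms(2)[of False] by (simp add: sum.distrib)
  finally show ?thesis .
qed

section \<open>Gram decomposition of positive semidefinite forms\<close>

definition quad_form :: "nat \<Rightarrow> (nat \<Rightarrow> nat \<Rightarrow> complex) \<Rightarrow> (nat \<Rightarrow> complex) \<Rightarrow> complex" where
  "quad_form n B v = (\<Sum>i<n. \<Sum>j<n. cnj (v i) * B i j * v j)"

definition psd_form :: "nat \<Rightarrow> (nat \<Rightarrow> nat \<Rightarrow> complex) \<Rightarrow> bool" where
  "psd_form n B \<longleftrightarrow> (\<forall>i<n. \<forall>j<n. B j i = cnj (B i j)) \<and> (\<forall>v. 0 \<le> Re (quad_form n B v))"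

lemma psd_form_hermitian: "psd_form n B \<Longrightarrow> i < n \<Longrightarrow> j < n \<Longrightarrow> B j i = cnj (B i j)"
  unfolding psd_form_def by blast

lemma psd_form_nonneg: "psd_form n B \<Longrightarrow> 0 \<le> Re (quad_form n B v)"
  unfolding psd_form_def by blast

lemma psd_imp_psd_form:
  assumes "psd n A"
  shows "psd_form n (\<lambda>i j. A $$ (i,j))"
proof -
  have "A \<in> carrier_mat n n" "Defs.adjoint A = A"
    using assms unfolding psd_def by auto
  then have "A $$ (j,i) = cnj (A $$ (i,j))" if "i < n" "j < n" for i j
    using that unfolding Defs.adjoint_def by (metis (no_types, lifting) carrier_matD case_prod_conv index_mat(1))
  then show ?thesis
    using assms unfolding psd_def psd_form_def quad_form_def by blast
qed

lemma quad_form_Suc: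
  "quad_form (Suc n) B v = quad_form n B v + (\<Sum>i<n. cnj (v i) * B i n * v n)
     + (\<Sum>j<n. cnj (v n) * B n j * v j) + cnj (v n) * B n n * v n"
  unfolding quad_form_def by (simp add: sum.distrib add_ac)

lemma quad_form_cong: "(\<And>i. i < n \<Longrightarrow> v i = w i) \<Longrightarrow> quad_form n B v = quad_form n B w"
  unfolding quad_form_def by (intro sum.cong refl) auto

lemma quad_form_supported:
  assumes "S \<subseteq> {..<n}" and "\<And>k. k \<notin> S \<Longrightarrow> v k = 0"
  shows "quad_form n B v = (\<Sum>i\<in>S. \<Sum>j\<in>S. cnj (v i) * B i j * v j)"
proof -
  have "(\<Sum>j<n. cnj (v i) * B i j * v j) = (\<Sum>j\<in>S. cnj (v i) * B i j * v j)" for i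
    by (rule sum.mono_neutral_right) (use assms in auto)
  then have "quad_form n B v = (\<Sum>i<n. \<Sum>j\<in>S. cnj (v i) * B i j * v j)"
    unfolding quad_form_def by simp
  also have "\<dots> = (\<Sum>i\<in>S. \<Sum>j\<in>S. cnj (v i) * B i j * v j)"
    by (rule sum.mono_neutral_right) (use assms in auto)
  finally show ?thesis .
qed

lemma psd_form_diag:
  assumes "psd_form n B" "i < n"
  shows "B i i = of_real (Re (B i i))" "0 \<le> Re (B i i)"
proof -
  show "B i i = of_real (Re (B i i))"
    using psd_form_hermitian[OF assms(1,2,2)] by (simp add: complex_eq_iff)
  have "quad_form n B (\<lambda>k. if k = i then 1 else 0) = B i i"
    using assms(2) by (subst quad_form_supported[of "{i}"]) auto
  then show "0 \<le> Re (B i i)"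
    using psd_form_nonneg[OF assms(1)] by metis
qed

lemma psd_form_restrict:
  assumes "psd_form (Suc n) B"
  shows "psd_form n B"
  unfolding psd_form_def
proof (intro conjI allI impI)
  fix i j assume "i < n" "j < n"
  then show "B j i = cnj (B i j)"
    by (intro psd_form_hermitian[OF assms]) simp_all
next
  fix v :: "nat \<Rightarrow> complex"
  let ?w = "\<lambda>k. if k = n then 0 else v k"
  have "quad_form (Suc n) B ?w = quad_form n B ?w"
    by (simp add: quad_form_Suc)
  also have "\<dots> = quad_form n B v"
    by (rule quad_form_cong) simp
  finally have "quad_form (Suc n) B ?w = quad_form n B v" .
  then show "0 \<le> Re (quad_form n B v)"
    using psd_form_nonneg[OF assms, of ?w] by simp
qed

lemma psd_form_zero_diag_imp_zero:
  assumes B: "psd_form N B" and "n < N" "i < N" and "B n n = 0"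
  shows "B i n = 0"
proof (cases "i = n")
  case False
  define c where "c = B i n"
  define d where "d = Re (B i i)"
  define r where "r = 1 / (d + 1)"
  have "0 \<le> d"
    using psd_form_diag(2)[OF B \<open>i < N\<close>] by (simp add: d_def)
  then have "0 < r" "r * d < 1"
    by (simp_all add: r_def field_simps)
  let ?s = "- (of_real r * c)"
  have Bii: "B i i = of_real d"
    using psd_form_diag(1)[OF B \<open>i < N\<close>] by (simp add: d_def)
  have Bni: "B n i = cnj c"
    using psd_form_hermitian[OF B \<open>i < N\<close> \<open>n < N\<close>] by (simp add: c_def)
  \<comment> \<open>A test vector supported on i and n shows that the form would be negative if c were nonzero.\<close>
  have "quad_form N B (\<lambda>k. if k = i then ?s else if k = n then 1 else 0) =
        cnj ?s * B i i * ?s + cnj ?s * B i n + B n i * ?s + B n n"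
    using assms False by (subst quad_form_supported[of "{i, n}"]) auto
  also have "Re \<dots> = r * (r * d - 2) * (Re c ^ 2 + Im c ^ 2)"
    unfolding Bii Bni \<open>B n n = 0\<close> c_def[symmetric] by (simp add: algebra_simps power2_eq_square)
  finally have "0 \<le> r * (r * d - 2) * (Re c ^ 2 + Im c ^ 2)"
    using psd_form_nonneg[OF B] by metis
  moreover have "r * (r * d - 2) < 0"
    using \<open>0 < r\<close> \<open>r * d < 1\<close> by (simp add: mult_pos_neg)
  ultimately have "Re c ^ 2 + Im c ^ 2 \<le> 0"
    by (metis mult_neg_pos not_le)
  then show ?thesis
    by (simp add: c_def complex_eq_iff sum_power2_le_zero_iff)
qed (use assms in simp)

lemma psd_form_schur_complement:
  assumes B: "psd_form (Suc n) B" and "0 < Re (B n n)"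
  defines "u \<equiv> \<lambda>i. B i n / of_real (sqrt (Re (B n n)))"
  shows "psd_form n (\<lambda>i j. B i j - u i * cnj (u j))"
  unfolding psd_form_def
proof (intro conjI allI impI)
  fix i j assume "i < n" "j < n"
  then have "B j i = cnj (B i j)"
    by (intro psd_form_hermitian[OF B]) simp_all
  then show "B j i - u j * cnj (u i) = cnj (B i j - u i * cnj (u j))"
    by simp
next
  fix v :: "nat \<Rightarrow> complex"
  define d where "d = Re (B n n)"
  define c where "c = (\<Sum>j<n. B n j * v j)"
  define w where "w = (\<lambda>k. if k = n then - c / of_real d else v k)"
  have "0 < d"
    using assms(2) by (simp add: d_def)
  have Bnn: "B n n = of_real d"
    using psd_form_diag(1)[OF B, of n] by (simp add: d_def)
  have col: "B i n = cnj (B n i)" if "i < n" for i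
    using psd_form_hermitian[OF B, of n i] that by simp
  have sqrt_d: "of_real (sqrt d) * of_real (sqrt d) = (of_real d :: complex)"
    using \<open>0 < d\<close> by (simp flip: of_real_mult)
  \<comment> \<open>Completing the square: extending v by a suitable last entry turns the form of B into that of the complement.\<close>
  have "quad_form (Suc n) B w = quad_form n B v - c * cnj c / of_real d"
  proof -
    have "(\<Sum>i<n. cnj (w i) * B i n * w n) = w n * cnj c"
      unfolding c_def by (simp add: w_def col sum_distrib_left mult_ac)
    moreover have "(\<Sum>j<n. cnj (w n) * B n j * w j) = cnj (w n) * c"
      unfolding c_def by (simp add: sum_distrib_left w_def mult.assoc)
    moreover have "quad_form n B w = quad_form n B v"
      by (rule quad_form_cong) (simp add: w_def)
    ultimately show ?thesis
      using \<open>0 < d\<close> unfolding quad_form_Suc Bnn by (simp add: w_def field_simps)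
  qed
  also have "\<dots> = (\<Sum>i<n. \<Sum>j<n. cnj (v i) * (B i j - u i * cnj (u j)) * v j)"
  proof -
    have "(\<Sum>j<n. cnj (u j) * v j) = c / of_real (sqrt d)"
      unfolding c_def u_def d_def[symmetric] by (simp add: col sum_divide_distrib)
    then have "cnj (\<Sum>i<n. cnj (u i) * v i) * (\<Sum>j<n. cnj (u j) * v j) = c * cnj c / of_real d"
      using \<open>0 < d\<close> sqrt_d by (simp only: complex_cnj_divide complex_cnj_complex_of_real) (simp add: field_simps)
    then have "(\<Sum>i<n. \<Sum>j<n. cnj (cnj (u i) * v i) * (cnj (u j) * v j)) = c * cnj c / of_real d"
      by (simp only: sum_product cnj_sum)
    then show ?thesis
      unfolding quad_form_def by (simp add: algebra_simps sum_subtractf)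
  qed
  finally show "0 \<le> Re (quad_form n (\<lambda>i j. B i j - u i * cnj (u j)) v)"
    using psd_form_nonneg[OF B, of w] unfolding quad_form_def by simp
qed

lemma psd_form_split_last:
  assumes B: "psd_form (Suc n) B"
  obtains u where "psd_form n (\<lambda>i j. B i j - u i * cnj (u j))"
    and "\<And>i. i < Suc n \<Longrightarrow> B i n = u i * cnj (u n)"
    and "\<And>j. j < Suc n \<Longrightarrow> B n j = u n * cnj (u j)"
proof (cases "Re (B n n) = 0")
  case True
  then have "B n n = 0"
    using psd_form_diag(1)[OF B, of n] by simp
  then have col: "B i n = 0" if "i < Suc n" for i
    using psd_form_zero_diag_imp_zero[OF B _ that] by simp
  have "B n j = 0" if "j < Suc n" for j
    using psd_form_hermitian[OF B that, of n] col[OF that] by simp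
  with col psd_form_restrict[OF B] show ?thesis
    by (intro that[of "\<lambda>_. 0"]) simp_all
next
  case False
  define d where "d = Re (B n n)"
  define u where "u = (\<lambda>i. B i n / of_real (sqrt d))"
  have "0 < d"
    using False psd_form_diag(2)[OF B, of n] by (simp add: d_def)
  have Bnn: "B n n = of_real d"
    using psd_form_diag(1)[OF B, of n] by (simp add: d_def)
  have sqrt_d: "of_real (sqrt d) * of_real (sqrt d) = (of_real d :: complex)"
    using \<open>0 < d\<close> by (simp flip: of_real_mult)
  have un: "u n = of_real (sqrt d)"
    unfolding u_def Bnn using \<open>0 < d\<close> sqrt_d by (simp add: field_simps)
  have col: "B i n = u i * cnj (u n)" for i
    unfolding un using \<open>0 < d\<close> by (simp add: u_def)
  show ?thesis
  proof (rule that)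
    show "psd_form n (\<lambda>i j. B i j - u i * cnj (u j))"
      using psd_form_schur_complement[OF B] \<open>0 < d\<close> unfolding u_def d_def by simp
    show "B i n = u i * cnj (u n)" for i
      by (rule col)
    show "B n j = u n * cnj (u j)" if "j < Suc n" for j
      using psd_form_hermitian[OF B that, of n] col[of j] un by simp
  qed
qed

lemma psd_form_gram:
  "psd_form n B \<Longrightarrow> \<exists>vs. \<forall>i<n. \<forall>j<n. B i j = (\<Sum>k<n. vs k i * cnj (vs k j))"
proof (induction n arbitrary: B)
  case (Suc n)
  obtain u where "psd_form n (\<lambda>i j. B i j - u i * cnj (u j))"
    and col: "\<And>i. i < Suc n \<Longrightarrow> B i n = u i * cnj (u n)"
    and row: "\<And>j. j < Suc n \<Longrightarrow> B n j = u n * cnj (u j)"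
    using psd_form_split_last[OF Suc.prems] by blast
  then obtain vs where vs: "\<forall>i<n. \<forall>j<n. B i j - u i * cnj (u j) = (\<Sum>k<n. vs k i * cnj (vs k j))"
    using Suc.IH by blast
  define ws where "ws = (\<lambda>k i. if k = n then u i else if i < n then vs k i else 0)"
  have "B i j = (\<Sum>k<Suc n. ws k i * cnj (ws k j))" if "i < Suc n" "j < Suc n" for i j
  proof (cases "i < n \<and> j < n")
    case True
    then show ?thesis
      using vs by (simp add: ws_def algebra_simps)
  next
    case False
    then have "i = n \<or> j = n"
      using that by auto
    then show ?thesis
      using False col row that by (auto simp: ws_def)
  qed
  then show ?case
    by blast
qed simp

section \<open>Traces of block sandwiches\<close>

text \<open>In coordinates, the trace of M (1 \<otimes> U) R (1 \<otimes> W)\<dagger> where U, W act on the last,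
  four-dimensional tensor factor; U and W need not be unitary.\<close>

definition sandwich_trace ::
  "nat \<Rightarrow> complex mat \<Rightarrow> complex mat \<Rightarrow> (nat \<Rightarrow> nat \<Rightarrow> complex) \<Rightarrow> (nat \<Rightarrow> nat \<Rightarrow> complex) \<Rightarrow> complex"
where
  "sandwich_trace N M R U W = (\<Sum>i<N. \<Sum>j<N. \<Sum>b3<4. \<Sum>b4<4.
     M $$ (i,j) * R $$ (4 * (j div 4) + b3, 4 * (i div 4) + b4) * U (j mod 4) b3 * cnj (W (i mod 4) b4))"

definition block_functional ::
  "nat \<Rightarrow> complex mat \<Rightarrow> complex mat \<Rightarrow> (nat \<Rightarrow> nat \<Rightarrow> nat \<Rightarrow> nat \<Rightarrow> complex) \<Rightarrow> complex"
where
  "block_functional N M R T = (\<Sum>i<N. \<Sum>j<N. \<Sum>b3<4. \<Sum>b4<4.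
     M $$ (i,j) * R $$ (4 * (j div 4) + b3, 4 * (i div 4) + b4) * T (i mod 4) (j mod 4) b3 b4)"

lemma sandwich_trace_eq_block_functional:
  "sandwich_trace N M R U W = block_functional N M R (\<lambda>b1 b2 b3 b4. U b2 b3 * cnj (W b1 b4))"
  unfolding sandwich_trace_def block_functional_def by (simp add: mult.assoc)

lemma block_functional_add:
  "block_functional N M R (\<lambda>b1 b2 b3 b4. T b1 b2 b3 b4 + T' b1 b2 b3 b4) =
   block_functional N M R T + block_functional N M R T'"
  unfolding block_functional_def by (simp add: distrib_left sum.distrib)

lemma block_functional_scale:
  "block_functional N M R (\<lambda>b1 b2 b3 b4. c * T b1 b2 b3 b4) = c * block_functional N M R T"
  unfolding block_functional_def by (simp add: sum_distrib_left mult.left_commute)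

lemma block_functional_sum:
  "finite A \<Longrightarrow> block_functional N M R (\<lambda>b1 b2 b3 b4. \<Sum>l\<in>A. T l b1 b2 b3 b4) =
     (\<Sum>l\<in>A. block_functional N M R (T l))"
  by (induction A rule: finite_induct) (simp_all add: block_functional_add, simp add: block_functional_def)

lemma block_functional_cong:
  "(\<And>b1 b2 b3 b4. b1 < 4 \<Longrightarrow> b2 < 4 \<Longrightarrow> b3 < 4 \<Longrightarrow> b4 < 4 \<Longrightarrow> T b1 b2 b3 b4 = T' b1 b2 b3 b4) \<Longrightarrow>
   block_functional N M R T = block_functional N M R T'"
  unfolding block_functional_def by (intro sum.cong refl) simp

lemma sandwich_trace_add_left:
  "sandwich_trace N M R (\<lambda>i j. U i j + c * U' i j) W = sandwich_trace N M R U W + c * sandwich_trace N M R U' W"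
  unfolding sandwich_trace_eq_block_functional
  by (simp add: distrib_right mult.assoc block_functional_add block_functional_scale)

lemma sandwich_trace_add_right:
  "sandwich_trace N M R U (\<lambda>i j. W i j + c * W' i j) = sandwich_trace N M R U W + cnj c * sandwich_trace N M R U W'"
  unfolding sandwich_trace_eq_block_functional
  by (simp add: distrib_left mult.left_commute block_functional_add block_functional_scale)

lemma sandwich_trace_sum_left:
  "finite S \<Longrightarrow> (\<Sum>k\<in>S. sandwich_trace N (Ms k) R U W) = (\<Sum>i<N. \<Sum>j<N. \<Sum>b3<4. \<Sum>b4<4.
     (\<Sum>k\<in>S. Ms k $$ (i,j)) * R $$ (4 * (j div 4) + b3, 4 * (i div 4) + b4) * U (j mod 4) b3 * cnj (W (i mod 4) b4))"
  by (induction S rule: finite_induct) (simp_all add: sandwich_trace_def distrib_right sum.distrib)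

lemma nonneg_quadratic_discriminant:
  fixes a b c :: real
  assumes "\<And>t. 0 \<le> a + b * t + c * t^2" and "0 \<le> c"
  shows "b^2 \<le> 4 * a * c"
proof (cases "c = 0")
  case True
  have "b = 0"
  proof (rule ccontr)
    assume "b \<noteq> 0"
    then show False
      using assms(1)[of "-(a + 1) / b"] True by (simp add: field_simps)
  qed
  with True show ?thesis by simp
next
  case False
  with assms(2) have "0 < c" by simp
  then have "0 \<le> a - b^2 / (4 * c)"
    using assms(1)[of "-b / (2 * c)"] by (simp add: field_simps power2_eq_square)
  with \<open>0 < c\<close> show ?thesis
    by (simp add: field_simps)
qed

lemma sandwich_trace_cauchy_schwarz:
  assumes nonneg: "\<And>U. 0 \<le> Re (sandwich_trace N M R U U)"
  shows "(\<Sum>c\<in>I. Re (sandwich_trace N M R (X c) (Y c) + sandwich_trace N M R (Y c) (X c)))^2 \<le>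
     4 * (\<Sum>c\<in>I. Re (sandwich_trace N M R (X c) (X c))) * (\<Sum>c\<in>I. Re (sandwich_trace N M R (Y c) (Y c)))"
proof (rule nonneg_quadratic_discriminant)
  fix t :: real
  let ?Z = "\<lambda>c i j. X c i j + of_real t * Y c i j"
  have "Re (sandwich_trace N M R (?Z c) (?Z c)) = Re (sandwich_trace N M R (X c) (X c))
      + t * Re (sandwich_trace N M R (X c) (Y c) + sandwich_trace N M R (Y c) (X c))
      + t^2 * Re (sandwich_trace N M R (Y c) (Y c))" for c
    unfolding sandwich_trace_add_left sandwich_trace_add_right by (simp add: algebra_simps power2_eq_square)
  then have "(\<Sum>c\<in>I. Re (sandwich_trace N M R (?Z c) (?Z c))) =
      (\<Sum>c\<in>I. Re (sandwich_trace N M R (X c) (X c)))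
      + (\<Sum>c\<in>I. Re (sandwich_trace N M R (X c) (Y c) + sandwich_trace N M R (Y c) (X c))) * t
      + (\<Sum>c\<in>I. Re (sandwich_trace N M R (Y c) (Y c))) * t^2"
    by (simp add: sum.distrib sum_distrib_left sum_distrib_right algebra_simps)
  moreover have "0 \<le> (\<Sum>c\<in>I. Re (sandwich_trace N M R (?Z c) (?Z c)))"
    by (intro sum_nonneg nonneg)
  ultimately show "0 \<le> (\<Sum>c\<in>I. Re (sandwich_trace N M R (X c) (X c)))
      + (\<Sum>c\<in>I. Re (sandwich_trace N M R (X c) (Y c) + sandwich_trace N M R (Y c) (X c))) * t
      + (\<Sum>c\<in>I. Re (sandwich_trace N M R (Y c) (Y c))) * t^2"
    by simp
qed (intro sum_nonneg nonneg)

lemma index_mult_mat_sum: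
  "A \<in> carrier_mat n m \<Longrightarrow> B \<in> carrier_mat m p \<Longrightarrow> i < n \<Longrightarrow> j < p \<Longrightarrow>
   (A * B) $$ (i,j) = (\<Sum>k<m. A $$ (i,k) * B $$ (k,j))"
  by (auto simp: scalar_prod_def lessThan_atLeast0 intro!: sum.cong)

lemma index_adjoint:
  "A \<in> carrier_mat n m \<Longrightarrow> i < m \<Longrightarrow> j < n \<Longrightarrow> Defs.adjoint A $$ (i,j) = cnj (A $$ (j,i))"
  unfolding Defs.adjoint_def by auto

lemma adjoint_carrier: "A \<in> carrier_mat n m \<Longrightarrow> Defs.adjoint A \<in> carrier_mat m n"
  unfolding Defs.adjoint_def by auto

lemma kron_one_carrier: "B \<in> carrier_mat 4 4 \<Longrightarrow> kron (1\<^sub>m d) B \<in> carrier_mat (d * 4) (d * 4)"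
  unfolding kron_def by auto

lemma index_kron_one:
  assumes "B \<in> carrier_mat 4 4" "j < d * 4" "k < d * 4"
  shows "kron (1\<^sub>m d) B $$ (j,k) = (if k div 4 = j div 4 then B $$ (j mod 4, k mod 4) else 0)"
proof -
  have "j div 4 < d" "k div 4 < d"
    using assms by auto
  with assms show ?thesis
    unfolding kron_def by auto
qed

lemma sum_same_block:
  fixes g :: "nat \<Rightarrow> 'a::comm_monoid_add"
  assumes "j < d * 4"
  shows "(\<Sum>k<d * 4. if k div 4 = j div 4 then g k else 0) = (\<Sum>b<4. g (4 * (j div 4) + b))"
proof -
  let ?block = "(\<lambda>b. 4 * (j div 4) + b) ` {..<4}"
  have "j div 4 < d"
    using assms by simp
  then have "?block \<subseteq> {..<d * 4}"
    by auto
  moreover have "k \<in> ?block" if "k div 4 = j div 4" for k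
    using that by (metis div_mult_mod_eq image_eqI lessThan_iff mod_less_divisor mult.commute zero_less_numeral)
  ultimately have "(\<Sum>k<d * 4. if k div 4 = j div 4 then g k else 0) =
      (\<Sum>k\<in>?block. if k div 4 = j div 4 then g k else 0)"
    by (intro sum.mono_neutral_right) auto
  also have "\<dots> = (\<Sum>b<4. g (4 * (j div 4) + b))"
    by (subst sum.reindex) (auto simp: inj_on_def)
  finally show ?thesis .
qed

lemma sum_lessThan_mult_4:
  fixes g :: "nat \<Rightarrow> nat \<Rightarrow> 'a::comm_monoid_add"
  shows "(\<Sum>i<d * 4. g (i div 4) (i mod 4)) = (\<Sum>a<d. \<Sum>b<4. g a b)"
proof -
  have "(\<Sum>i<d * 4. g (i div 4) (i mod 4)) = (\<Sum>a<d. \<Sum>i\<in>{a * 4..<a * 4 + 4}. g (i div 4) (i mod 4))"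
    by (rule sum.nat_group[symmetric])
  also have "\<dots> = (\<Sum>a<d. \<Sum>b<4. g a b)"
  proof (rule sum.cong[OF refl])
    fix a
    have "(\<Sum>i\<in>{a * 4..<a * 4 + 4}. g (i div 4) (i mod 4)) = (\<Sum>i\<in>{0 + a * 4..<4 + a * 4}. g (i div 4) (i mod 4))"
      by (simp add: add.commute)
    also have "\<dots> = (\<Sum>b<4. g a b)"
      unfolding sum.shift_bounds_nat_ivl by (simp add: atLeast0LessThan)
    finally show "(\<Sum>i\<in>{a * 4..<a * 4 + 4}. g (i div 4) (i mod 4)) = (\<Sum>b<4. g a b)" .
  qed
  finally show ?thesis .
qed

lemma index_kron_one_sandwich:
  fixes R B :: "complex mat"
  assumes R: "R \<in> carrier_mat (d * 4) (d * 4)" and B: "B \<in> carrier_mat 4 4"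
    and "j < d * 4" "i < d * 4"
  defines "V \<equiv> kron (1\<^sub>m d) B"
  shows "(V * R * Defs.adjoint V) $$ (j,i) = (\<Sum>b3<4. \<Sum>b4<4.
           B $$ (j mod 4, b3) * R $$ (4 * (j div 4) + b3, 4 * (i div 4) + b4) * cnj (B $$ (i mod 4, b4)))"
proof -
  have V: "V \<in> carrier_mat (d * 4) (d * 4)"
    unfolding V_def by (rule kron_one_carrier[OF B])
  have VR: "(V * R) $$ (j,l) = (\<Sum>b3<4. B $$ (j mod 4, b3) * R $$ (4 * (j div 4) + b3, l))" if "l < d * 4" for l
  proof -
    have "(V * R) $$ (j,l) = (\<Sum>k<d * 4. if k div 4 = j div 4 then B $$ (j mod 4, k mod 4) * R $$ (k,l) else 0)"
      using index_mult_mat_sum[OF V R \<open>j < d * 4\<close> that]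
      unfolding V_def by (auto simp: index_kron_one[OF B \<open>j < d * 4\<close>] intro!: sum.cong)
    then show ?thesis
      by (simp add: sum_same_block[OF \<open>j < d * 4\<close>])
  qed
  have adjV: "Defs.adjoint V $$ (l,i) = (if l div 4 = i div 4 then cnj (B $$ (i mod 4, l mod 4)) else 0)"
    if "l < d * 4" for l
    using that assms(4) unfolding V_def by (simp add: index_adjoint[OF V[unfolded V_def]] index_kron_one[OF B])
  have "(V * R * Defs.adjoint V) $$ (j,i) = (\<Sum>l<d * 4. (V * R) $$ (j,l) * Defs.adjoint V $$ (l,i))"
    using V R adjoint_carrier[OF V] assms(3,4) by (intro index_mult_mat_sum) auto
  also have "\<dots> = (\<Sum>l<d * 4. if l div 4 = i div 4 then (\<Sum>b3<4. B $$ (j mod 4, b3) * R $$ (4 * (j div 4) + b3, l))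
                     * cnj (B $$ (i mod 4, l mod 4)) else 0)"
    by (intro sum.cong refl) (simp add: VR adjV)
  also have "\<dots> = (\<Sum>b4<4. \<Sum>b3<4. B $$ (j mod 4, b3) * R $$ (4 * (j div 4) + b3, 4 * (i div 4) + b4)
                     * cnj (B $$ (i mod 4, b4)))"
    by (simp add: sum_same_block[OF \<open>i < d * 4\<close>] sum_distrib_right)
  also have "\<dots> = (\<Sum>b3<4. \<Sum>b4<4. B $$ (j mod 4, b3) * R $$ (4 * (j div 4) + b3, 4 * (i div 4) + b4)
                     * cnj (B $$ (i mod 4, b4)))"
    by (rule sum.swap)
  finally show ?thesis .
qed

lemma mtrace_kron_one_sandwich:
  fixes M R B :: "complex mat"
  assumes M: "M \<in> carrier_mat (d * 4) (d * 4)" and R: "R \<in> carrier_mat (d * 4) (d * 4)"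
    and B: "B \<in> carrier_mat 4 4"
  shows "mtrace (M * (kron (1\<^sub>m d) B * R * Defs.adjoint (kron (1\<^sub>m d) B))) =
         sandwich_trace (d * 4) M R (\<lambda>i j. B $$ (i,j)) (\<lambda>i j. B $$ (i,j))"
proof -
  let ?V = "kron (1\<^sub>m d) B"
  have X: "?V * R * Defs.adjoint ?V \<in> carrier_mat (d * 4) (d * 4)"
    using kron_one_carrier[OF B] R adjoint_carrier by (metis mult_carrier_mat)
  have "mtrace (M * (?V * R * Defs.adjoint ?V)) =
        (\<Sum>i<d * 4. \<Sum>j<d * 4. M $$ (i,j) * (?V * R * Defs.adjoint ?V) $$ (j,i))"
    unfolding mtrace_def using M by (auto intro!: sum.cong index_mult_mat_sum[OF M X])
  also have "\<dots> = sandwich_trace (d * 4) M R (\<lambda>i j. B $$ (i,j)) (\<lambda>i j. B $$ (i,j))"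
    unfolding sandwich_trace_def
  proof (intro sum.cong refl)
    fix i j assume "i \<in> {..<d * 4}" "j \<in> {..<d * 4}"
    then have "i < d * 4" "j < d * 4"
      by simp_all
    then show "M $$ (i,j) * (?V * R * Defs.adjoint ?V) $$ (j,i) = (\<Sum>b3<4. \<Sum>b4<4.
      M $$ (i,j) * R $$ (4 * (j div 4) + b3, 4 * (i div 4) + b4) * B $$ (j mod 4, b3) * cnj (B $$ (i mod 4, b4)))"
      unfolding index_kron_one_sandwich[OF R B \<open>j < d * 4\<close> \<open>i < d * 4\<close>] sum_distrib_left
      by (intro sum.cong refl) (simp only: mult.assoc mult.commute mult.left_commute)
  qed
  finally show ?thesis .
qed

lemma sandwich_trace_nonneg:
  assumes M: "psd (d * 4) M" and R: "psd (d * 4) R"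
  shows "0 \<le> Re (sandwich_trace (d * 4) M R U U)"
proof -
  let ?N = "d * 4"
  obtain vs where vs: "\<forall>i<?N. \<forall>j<?N. R $$ (i,j) = (\<Sum>k<?N. vs k i * cnj (vs k j))"
    using psd_form_gram[OF psd_imp_psd_form[OF R]] by blast
  \<comment> \<open>With R the Gram matrix of the vectors vs k, the trace splits into the quadratic forms of M
    at the vectors (1 \<otimes> U) (vs k).\<close>
  define x where "x = (\<lambda>k j. \<Sum>b3<4. U (j mod 4) b3 * vs k (4 * (j div 4) + b3))"
  have block: "4 * (j div 4) + b < ?N" if "j < ?N" "b < 4" for j b
  proof -
    have "j div 4 < d"
      using that(1) by simp
    with that(2) show ?thesis
      by linarith
  qed
  have entry: "(\<Sum>b3<4. \<Sum>b4<4. M $$ (i,j) * R $$ (4 * (j div 4) + b3, 4 * (i div 4) + b4)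
                 * U (j mod 4) b3 * cnj (U (i mod 4) b4))
      = (\<Sum>k<?N. cnj (x k i) * M $$ (i,j) * x k j)" if "i < ?N" "j < ?N" for i j
  proof -
    have "(\<Sum>b3<4. \<Sum>b4<4. M $$ (i,j) * R $$ (4 * (j div 4) + b3, 4 * (i div 4) + b4)
                 * U (j mod 4) b3 * cnj (U (i mod 4) b4))
      = (\<Sum>b3<4. \<Sum>b4<4. \<Sum>k<?N. M $$ (i,j) * (vs k (4 * (j div 4) + b3) * cnj (vs k (4 * (i div 4) + b4)))
                 * U (j mod 4) b3 * cnj (U (i mod 4) b4))"
      using vs block that by (simp add: sum_distrib_left sum_distrib_right)
    also have "\<dots> = (\<Sum>k<?N. \<Sum>b3<4. \<Sum>b4<4. M $$ (i,j) * (vs k (4 * (j div 4) + b3) * cnj (vs k (4 * (i div 4) + b4)))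
                 * U (j mod 4) b3 * cnj (U (i mod 4) b4))"
      by (subst sum.swap, subst (2) sum.swap) (rule refl)
    also have "\<dots> = (\<Sum>k<?N. cnj (x k i) * M $$ (i,j) * x k j)"
      unfolding x_def cnj_sum complex_cnj_mult sum_distrib_left sum_distrib_right
      by (intro sum.cong refl) (simp only: mult.assoc mult.commute mult.left_commute)
    finally show ?thesis .
  qed
  have "sandwich_trace ?N M R U U = (\<Sum>i<?N. \<Sum>j<?N. \<Sum>k<?N. cnj (x k i) * M $$ (i,j) * x k j)"
    unfolding sandwich_trace_def by (rule sum.cong[OF refl], rule sum.cong[OF refl]) (simp add: entry)
  also have "\<dots> = (\<Sum>k<?N. quad_form ?N (\<lambda>i j. M $$ (i,j)) (x k))"
    unfolding quad_form_def by (subst sum.swap, subst (2) sum.swap) (rule refl)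
  finally have "Re (sandwich_trace ?N M R U U) = (\<Sum>k<?N. Re (quad_form ?N (\<lambda>i j. M $$ (i,j)) (x k)))"
    by simp
  also have "\<dots> \<ge> 0"
    by (intro sum_nonneg psd_form_nonneg[OF psd_imp_psd_form[OF M]])
  finally show ?thesis .
qed

lemma sum_povm_sandwich_trace:
  assumes "povm (d * 4) Ms" and "density (d * 4) R"
    and isometry: "\<And>b3 b4. b3 < 4 \<Longrightarrow> b4 < 4 \<Longrightarrow>
      (\<Sum>b<4. U b b3 * cnj (U b b4)) = (if b3 = b4 then 1 else 0)"
  shows "(\<Sum>k<length Ms. sandwich_trace (d * 4) (Ms ! k) R U U) = 1"
proof -
  let ?N = "d * 4"
  have completeness: "(\<Sum>k<length Ms. Ms ! k $$ (i,j)) = (if i = j then 1 else 0)" if "i < ?N" "j < ?N" for i j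
    using assms(1) that unfolding povm_def by blast
  define g where "g = (\<lambda>i j. \<Sum>b3<4. \<Sum>b4<4.
    R $$ (4 * (j div 4) + b3, 4 * (i div 4) + b4) * U (j mod 4) b3 * cnj (U (i mod 4) b4))"
  have "(\<Sum>k<length Ms. sandwich_trace ?N (Ms ! k) R U U) =
        (\<Sum>i<?N. \<Sum>j<?N. (\<Sum>k<length Ms. Ms ! k $$ (i,j)) * g i j)"
    unfolding sandwich_trace_sum_left[OF finite_lessThan] g_def by (simp add: sum_distrib_left mult.assoc)
  also have "\<dots> = (\<Sum>i<?N. \<Sum>j<?N. if i = j then g i j else 0)"
    by (intro sum.cong refl) (simp add: completeness)
  also have "\<dots> = (\<Sum>i<?N. g i i)"
    by simp
  also have "\<dots> = (\<Sum>a<d. \<Sum>b<4. \<Sum>b3<4. \<Sum>b4<4. R $$ (4 * a + b3, 4 * a + b4) * U b b3 * cnj (U b b4))"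
    unfolding g_def by (rule sum_lessThan_mult_4)
  also have "\<dots> = (\<Sum>a<d. \<Sum>b3<4. \<Sum>b4<4. R $$ (4 * a + b3, 4 * a + b4) * (\<Sum>b<4. U b b3 * cnj (U b b4)))"
  proof (rule sum.cong[OF refl])
    fix a
    have "(\<Sum>b<4::nat. \<Sum>b3<4::nat. \<Sum>b4<4::nat. R $$ (4 * a + b3, 4 * a + b4) * U b b3 * cnj (U b b4))
        = (\<Sum>b3<4. \<Sum>b4<4. \<Sum>b<4. R $$ (4 * a + b3, 4 * a + b4) * U b b3 * cnj (U b b4))"
      by (subst sum.swap, subst (2) sum.swap) (rule refl)
    then show "(\<Sum>b<4::nat. \<Sum>b3<4::nat. \<Sum>b4<4::nat. R $$ (4 * a + b3, 4 * a + b4) * U b b3 * cnj (U b b4))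
        = (\<Sum>b3<4. \<Sum>b4<4. R $$ (4 * a + b3, 4 * a + b4) * (\<Sum>b<4. U b b3 * cnj (U b b4)))"
      by (simp add: sum_distrib_left mult.assoc)
  qed
  also have "\<dots> = (\<Sum>a<d. \<Sum>b3<4. R $$ (4 * a + b3, 4 * a + b3))"
    by (intro sum.cong refl) (simp add: isometry if_distrib cong: if_cong)
  also have "\<dots> = (\<Sum>i<?N. R $$ (i,i))"
    using sum_lessThan_mult_4[of "\<lambda>a b. R $$ (4 * a + b, 4 * a + b)" d] by simp
  also have "\<dots> = 1"
    using assms(2) unfolding density_def psd_def mtrace_def by auto
  finally show ?thesis .
qed

section \<open>Bob's unitaries\<close>

lemma less_4_cases: "(i::nat) < 4 \<longleftrightarrow> i = 0 \<or> i = 1 \<or> i = 2 \<or> i = 3"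
  by auto

lemma sum_lessThan_4: "(\<Sum>k<4::nat. f k) = f 0 + f 1 + f 2 + (f 3 :: 'a::comm_monoid_add)"
  by (simp add: eval_nat_numeral ac_simps)

lemma sum_UNIV_bool: "(\<Sum>b\<in>UNIV. f b) = f True + (f False :: 'a::comm_monoid_add)"
  by (simp add: UNIV_bool add.commute)

lemma mat_mult_mat_eq: "mat n m f * mat m p g = mat n p (\<lambda>(i,j). \<Sum>k<m. f (i,k) * g (k,j))"
  by (rule eq_matI) (auto simp: scalar_prod_def lessThan_atLeast0 intro!: sum.cong)

lemma kron_mat_2:
  "kron (mat 2 2 f) (mat 2 2 g) = mat 4 4 (\<lambda>(i,j). f (i div 2, j div 2) * g (i mod 2, j mod 2))"
  unfolding kron_def by (rule eq_matI) auto

lemma one_mat_eq_mat: "1\<^sub>m n = mat n n (\<lambda>(i,j). if i = j then 1 else 0)"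
  by (rule eq_matI) auto

definition bob_entry :: "bool \<Rightarrow> bool \<Rightarrow> bool \<Rightarrow> bool \<Rightarrow> nat \<Rightarrow> nat \<Rightarrow> complex" where
  "bob_entry y h1 h2 p i j =
    (if y then
      (if h1 then
        (if h2 then
          (if p then [[0,0,0,-1],[0,0,-1,0],[0,-1,0,0],[-1,0,0,0]]
           else [[0,0,0,-1],[0,0,1,0],[0,1,0,0],[-1,0,0,0]])
         else
          (if p then [[0,0,-\<i>,0],[0,0,0,\<i>],[-\<i>,0,0,0],[0,\<i>,0,0]]
           else [[0,0,-\<i>,0],[0,0,0,-\<i>],[\<i>,0,0,0],[0,\<i>,0,0]]))
       else
        (if h2 then
          (if p then [[0,-\<i>,0,0],[-\<i>,0,0,0],[0,0,0,\<i>],[0,0,\<i>,0]]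
           else [[0,-\<i>,0,0],[\<i>,0,0,0],[0,0,0,-\<i>],[0,0,\<i>,0]])
         else
          (if p then [[1,0,0,0],[0,-1,0,0],[0,0,-1,0],[0,0,0,1]]
           else [[1,0,0,0],[0,1,0,0],[0,0,1,0],[0,0,0,1]])))
     else
      (if h1 then
        (if h2 then
          (if p then [[0,0,-1,0],[0,0,0,-1],[0,-1,0,0],[-1,0,0,0]]
           else [[0,0,-1,0],[0,0,0,1],[0,1,0,0],[-1,0,0,0]])
         else
          (if p then [[0,0,0,-\<i>],[0,0,\<i>,0],[-\<i>,0,0,0],[0,\<i>,0,0]]
           else [[0,0,0,-\<i>],[0,0,-\<i>,0],[\<i>,0,0,0],[0,\<i>,0,0]]))
       else
        (if h2 then
          (if p then [[0,-\<i>,0,0],[-\<i>,0,0,0],[0,0,\<i>,0],[0,0,0,\<i>]]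
           else [[0,-\<i>,0,0],[\<i>,0,0,0],[0,0,-\<i>,0],[0,0,0,\<i>]])
         else
          (if p then [[1,0,0,0],[0,-1,0,0],[0,0,0,-1],[0,0,1,0]]
           else [[1,0,0,0],[0,1,0,0],[0,0,0,1],[0,0,1,0]])))) ! i ! j"

lemma bob_unitary_eq_mat:
  "bob_unitary y h1 h2 p = mat 4 4 (\<lambda>(i,j). \<Sum>k<4. (\<Sum>l<4.
      (if p then [[1, 0], [0, -1::complex]] ! (i div 2) ! (l div 2) * [[1, 0], [0, -1]] ! (i mod 2) ! (l mod 2)
       else if i = l then 1 else 0) *
      ((if h1 then [[0, -\<i>], [\<i>, 0]] ! (l div 2) ! (k div 2) else if l div 2 = k div 2 then 1 else 0) *
       (if h2 then [[0, -\<i>], [\<i>, 0]] ! (l mod 2) ! (k mod 2) else if l mod 2 = k mod 2 then 1 else 0))) *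
      (if y then (if k = j then 1 else 0) else [[1,0,0,0],[0,1,0,0],[0,0,0,1],[0,0,1,0]] ! k ! j))"
proof -
  have pauli: "sigma_y = mat 2 2 (\<lambda>(i,j). [[0, -\<i>], [\<i>, 0]] ! i ! j)"
      "sigma_z = mat 2 2 (\<lambda>(i,j). [[1, 0], [0, -1]] ! i ! j)"
      "id2 = mat 2 2 (\<lambda>(i,j). if i = j then 1 else 0)"
      "cnot = mat 4 4 (\<lambda>(i,j). [[1,0,0,0],[0,1,0,0],[0,0,0,1],[0,0,1,0]] ! i ! j)"
    unfolding sigma_y_def sigma_z_def id2_def cnot_def mat_of_rows_list_def one_mat_eq_mat
    by (simp_all add: eval_nat_numeral)
  have phase: "(if p then kron sigma_z sigma_z else 1\<^sub>m 4) = mat 4 4 (\<lambda>(i,l).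
      if p then [[1, 0], [0, -1::complex]] ! (i div 2) ! (l div 2) * [[1, 0], [0, -1]] ! (i mod 2) ! (l mod 2)
      else if i = l then 1 else 0)"
    by (cases p) (simp_all add: pauli kron_mat_2 one_mat_eq_mat)
  have flips: "kron (if h1 then sigma_y else id2) (if h2 then sigma_y else id2) = mat 4 4 (\<lambda>(l,k).
      (if h1 then [[0, -\<i>], [\<i>, 0]] ! (l div 2) ! (k div 2) else if l div 2 = k div 2 then 1 else 0) *
      (if h2 then [[0, -\<i>], [\<i>, 0]] ! (l mod 2) ! (k mod 2) else if l mod 2 = k mod 2 then 1 else 0))"
    by (cases h1; cases h2) (simp_all add: pauli kron_mat_2)
  have cnot: "(if \<not> y then cnot else 1\<^sub>m 4) = mat 4 4 (\<lambda>(k,j).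
      if y then (if k = j then 1 else 0) else [[1,0,0,0],[0,1,0,0],[0,0,0,1],[0,0,1,0]] ! k ! j)"
    by (cases y) (simp_all add: pauli one_mat_eq_mat)
  show ?thesis
    unfolding bob_unitary_def phase flips cnot mat_mult_mat_eq by (simp add: sum_distrib_right)
qed

lemma bob_unitary_carrier: "bob_unitary y h1 h2 p \<in> carrier_mat 4 4"
  unfolding bob_unitary_eq_mat by simp

lemma index_bob_unitary:
  "i < 4 \<Longrightarrow> j < 4 \<Longrightarrow> bob_unitary y h1 h2 p $$ (i,j) = bob_entry y h1 h2 p i j"
  unfolding bob_unitary_eq_mat less_4_cases
  by (cases y; cases h1; cases h2; cases p; elim disjE; simp add: bob_entry_def sum_lessThan_4)

lemma bob_entry_isometry:
  "b3 < 4 \<Longrightarrow> b4 < 4 \<Longrightarrow>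
   (\<Sum>b<4. bob_entry y h1 h2 p b b3 * cnj (bob_entry y h1 h2 p b b4)) = (if b3 = b4 then 1 else 0)"
  unfolding less_4_cases
  by (cases y; cases h1; cases h2; cases p; elim disjE; simp add: bob_entry_def sum_lessThan_4)

(* With U Bob's matrix (entries bob_entry) and X an operator on B1 B2, twice the sum
   over h1, h2, p of U X U^dagger equals sum_c (K0_c X K0_c^dagger + D_c X D_c^dagger) for y = 0 and
   sum_c (D_c X D_c^dagger + K1_c X K1_c^dagger) for y = 1, where D = kraus_shared, K0 = kraus_y0 and
   K1 = kraus_y1; weighted by (-1)^(h1 + h2) it becomes sum_c (D_c X K_c^dagger + K_c X D_c^dagger).
   The operators D_c shared by both values of y tie Alice's information about y to her
   information about the parity. *)

definition kraus_shared :: "nat \<Rightarrow> nat \<Rightarrow> nat \<Rightarrow> complex" where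
  "kraus_shared c i j =
    [[[1,-1,1,1],[0,0,0,0],[0,0,0,0],[1,-1,1,1]], [[1,-1,-1,-1],[0,0,0,0],[0,0,0,0],[-1,1,1,1]],
     [[0,0,0,0],[-1,1,1,1],[-1,1,1,1],[0,0,0,0]], [[0,0,0,0],[-1,1,-1,-1],[1,-1,1,1],[0,0,0,0]]] ! c ! i ! j"

definition kraus_y0 :: "nat \<Rightarrow> nat \<Rightarrow> nat \<Rightarrow> complex" where
  "kraus_y0 c i j =
    [[[1,1,1,-1],[0,0,0,0],[0,0,0,0],[1,1,1,-1]], [[1,1,-1,1],[0,0,0,0],[0,0,0,0],[-1,-1,1,-1]],
     [[0,0,0,0],[1,1,-1,1],[1,1,-1,1],[0,0,0,0]], [[0,0,0,0],[1,1,1,-1],[-1,-1,-1,1],[0,0,0,0]]] ! c ! i ! j"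

definition kraus_y1 :: "nat \<Rightarrow> nat \<Rightarrow> nat \<Rightarrow> complex" where
  "kraus_y1 c i j =
    [[[1,1,-1,1],[0,0,0,0],[0,0,0,0],[1,1,-1,1]], [[1,1,1,-1],[0,0,0,0],[0,0,0,0],[-1,-1,-1,1]],
     [[0,0,0,0],[1,1,1,-1],[1,1,1,-1],[0,0,0,0]], [[0,0,0,0],[1,1,-1,1],[-1,-1,1,-1],[0,0,0,0]]] ! c ! i ! j"

abbreviation parity_sign :: "bool \<Rightarrow> bool \<Rightarrow> complex" where
  "parity_sign h1 h2 \<equiv> if h1 = h2 then 1 else -1"

lemma bob_twirl_y0:
  "b1 < 4 \<Longrightarrow> b2 < 4 \<Longrightarrow> b3 < 4 \<Longrightarrow> b4 < 4 \<Longrightarrow>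
   2 * (\<Sum>h1\<in>UNIV. \<Sum>h2\<in>UNIV. \<Sum>p\<in>UNIV. 1 * (bob_entry False h1 h2 p b2 b3 * cnj (bob_entry False h1 h2 p b1 b4))) =
   (\<Sum>c<4. kraus_y0 c b2 b3 * cnj (kraus_y0 c b1 b4) + kraus_shared c b2 b3 * cnj (kraus_shared c b1 b4))"
  unfolding less_4_cases
  by (elim disjE; simp add: bob_entry_def kraus_y0_def kraus_shared_def sum_lessThan_4 sum_UNIV_bool)

lemma bob_twirl_y1:
  "b1 < 4 \<Longrightarrow> b2 < 4 \<Longrightarrow> b3 < 4 \<Longrightarrow> b4 < 4 \<Longrightarrow>
   2 * (\<Sum>h1\<in>UNIV. \<Sum>h2\<in>UNIV. \<Sum>p\<in>UNIV. 1 * (bob_entry True h1 h2 p b2 b3 * cnj (bob_entry True h1 h2 p b1 b4))) =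
   (\<Sum>c<4. kraus_shared c b2 b3 * cnj (kraus_shared c b1 b4) + kraus_y1 c b2 b3 * cnj (kraus_y1 c b1 b4))"
  unfolding less_4_cases
  by (elim disjE; simp add: bob_entry_def kraus_y1_def kraus_shared_def sum_lessThan_4 sum_UNIV_bool)

lemma bob_parity_twirl_y0:
  "b1 < 4 \<Longrightarrow> b2 < 4 \<Longrightarrow> b3 < 4 \<Longrightarrow> b4 < 4 \<Longrightarrow>
   2 * (\<Sum>h1\<in>UNIV. \<Sum>h2\<in>UNIV. \<Sum>p\<in>UNIV. parity_sign h1 h2 * (bob_entry False h1 h2 p b2 b3 * cnj (bob_entry False h1 h2 p b1 b4))) =
   (\<Sum>c<4. kraus_shared c b2 b3 * cnj (kraus_y0 c b1 b4) + kraus_y0 c b2 b3 * cnj (kraus_shared c b1 b4))"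
  unfolding less_4_cases
  by (elim disjE; simp add: bob_entry_def kraus_y0_def kraus_shared_def sum_lessThan_4 sum_UNIV_bool)

lemma bob_parity_twirl_y1:
  "b1 < 4 \<Longrightarrow> b2 < 4 \<Longrightarrow> b3 < 4 \<Longrightarrow> b4 < 4 \<Longrightarrow>
   2 * (\<Sum>h1\<in>UNIV. \<Sum>h2\<in>UNIV. \<Sum>p\<in>UNIV. parity_sign h1 h2 * (bob_entry True h1 h2 p b2 b3 * cnj (bob_entry True h1 h2 p b1 b4))) =
   (\<Sum>c<4. kraus_shared c b2 b3 * cnj (kraus_y1 c b1 b4) + kraus_y1 c b2 b3 * cnj (kraus_shared c b1 b4))"
  unfolding less_4_cases
  by (elim disjE; simp add: bob_entry_def kraus_y1_def kraus_shared_def sum_lessThan_4 sum_UNIV_bool)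

abbreviation bob_matrix :: "bool \<Rightarrow> bool \<Rightarrow> bool \<Rightarrow> bool \<Rightarrow> nat \<Rightarrow> nat \<Rightarrow> complex" where
  "bob_matrix y h1 h2 p \<equiv> \<lambda>i j. bob_unitary y h1 h2 p $$ (i,j)"

lemma sandwich_trace_bob_average:
  assumes "\<And>b1 b2 b3 b4. b1 < 4 \<Longrightarrow> b2 < 4 \<Longrightarrow> b3 < 4 \<Longrightarrow> b4 < 4 \<Longrightarrow>
     2 * (\<Sum>h1\<in>UNIV. \<Sum>h2\<in>UNIV. \<Sum>p\<in>UNIV. s h1 h2 * (bob_entry y h1 h2 p b2 b3 * cnj (bob_entry y h1 h2 p b1 b4))) =
     (\<Sum>c<(4::nat). X c b2 b3 * cnj (Y c b1 b4) + X' c b2 b3 * cnj (Y' c b1 b4))"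
  shows "2 * (\<Sum>h1\<in>UNIV. \<Sum>h2\<in>UNIV. \<Sum>p\<in>UNIV. s h1 h2 * sandwich_trace N M R (bob_matrix y h1 h2 p) (bob_matrix y h1 h2 p)) =
     (\<Sum>c<(4::nat). sandwich_trace N M R (X c) (Y c) + sandwich_trace N M R (X' c) (Y' c))"
proof -
  have "2 * (\<Sum>h1\<in>UNIV. \<Sum>h2\<in>UNIV. \<Sum>p\<in>UNIV. s h1 h2 * sandwich_trace N M R (bob_matrix y h1 h2 p) (bob_matrix y h1 h2 p))
     = block_functional N M R (\<lambda>b1 b2 b3 b4. 2 * (\<Sum>h1\<in>UNIV. \<Sum>h2\<in>UNIV. \<Sum>p\<in>UNIV.
         s h1 h2 * (bob_matrix y h1 h2 p b2 b3 * cnj (bob_matrix y h1 h2 p b1 b4))))"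
    unfolding sandwich_trace_eq_block_functional by (simp add: block_functional_scale block_functional_sum)
  also have "\<dots> = block_functional N M R (\<lambda>b1 b2 b3 b4. \<Sum>c<(4::nat). X c b2 b3 * cnj (Y c b1 b4) + X' c b2 b3 * cnj (Y' c b1 b4))"
    by (rule block_functional_cong) (simp add: index_bob_unitary assms)
  also have "\<dots> = (\<Sum>c<(4::nat). sandwich_trace N M R (X c) (Y c) + sandwich_trace N M R (X' c) (Y' c))"
    unfolding sandwich_trace_eq_block_functional by (simp add: block_functional_sum block_functional_add)
  finally show ?thesis .
qed

section \<open>The information trade-off\<close>

definition bob_weight :: "nat \<Rightarrow> complex mat \<Rightarrow> complex mat \<Rightarrow> bool \<Rightarrow> bool \<Rightarrow> bool \<Rightarrow> bool \<Rightarrow> real" where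
  "bob_weight N M R y h1 h2 p = Re (sandwich_trace N M R (bob_matrix y h1 h2 p) (bob_matrix y h1 h2 p))"

definition y_weight :: "nat \<Rightarrow> complex mat \<Rightarrow> complex mat \<Rightarrow> bool \<Rightarrow> real" where
  "y_weight N M R y = (\<Sum>h1\<in>UNIV. \<Sum>h2\<in>UNIV. \<Sum>p\<in>UNIV. bob_weight N M R y h1 h2 p)"

definition parity_weight :: "nat \<Rightarrow> complex mat \<Rightarrow> complex mat \<Rightarrow> bool \<Rightarrow> real" where
  "parity_weight N M R y = (\<Sum>h1\<in>UNIV. \<Sum>h2\<in>UNIV. \<Sum>p\<in>UNIV. (if h1 = h2 then 1 else -1) * bob_weight N M R y h1 h2 p)"

lemma sq_add_le_four_mult_add:
  fixes a b c x1 x2 :: real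
  assumes "0 \<le> a" "0 \<le> b" "0 \<le> c" and "x1^2 \<le> 4 * a * b" "x2^2 \<le> 4 * a * c"
  shows "(x1 + x2)^2 \<le> 4 * (a + b) * (a + c)"
proof -
  have "\<bar>x1\<bar> \<le> 2 * sqrt a * sqrt b" "\<bar>x2\<bar> \<le> 2 * sqrt a * sqrt c"
    using assms real_sqrt_le_mono[OF assms(4)] real_sqrt_le_mono[OF assms(5)]
    by (simp_all add: real_sqrt_mult)
  then have "(x1 + x2)^2 \<le> (2 * sqrt a * (sqrt b + sqrt c))^2"
    by (intro abs_le_square_iff[THEN iffD1]) (simp add: algebra_simps abs_triangle_ineq[THEN order_trans])
  also have "\<dots> = 4 * (a + b) * (a + c) - 4 * (a - sqrt b * sqrt c)^2"
  proof -
    have "(2 * u * (v + w))^2 = 4 * (u^2 + v^2) * (u^2 + w^2) - 4 * (u^2 - v * w)^2" for u v w :: real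
      by (simp add: power2_eq_square algebra_simps)
    then show ?thesis
      using assms(1-3) by (metis real_sqrt_pow2)
  qed
  finally show ?thesis
    by (smt (verit) zero_le_power2)
qed

lemma parity_weight_bound:
  fixes s :: real
  assumes nonneg: "\<And>U. 0 \<le> Re (sandwich_trace N M R U U)" and "s^2 = 1"
  shows "(parity_weight N M R False + s * parity_weight N M R True)^2 \<le>
         4 * y_weight N M R False * y_weight N M R True"
proof -
  let ?S = "\<lambda>X Y. \<Sum>c<(4::nat). Re (sandwich_trace N M R (X c) (Y c))"
  let ?X = "\<lambda>X Y. \<Sum>c<(4::nat). Re (sandwich_trace N M R (X c) (Y c) + sandwich_trace N M R (Y c) (X c))"
  have parity_sign_real: "Re (parity_sign h1 h2) = (if h1 = h2 then 1 else -1)" "Im (parity_sign h1 h2) = 0" for h1 h2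
    by simp_all
  have "2 * y_weight N M R False = ?S kraus_y0 kraus_y0 + ?S kraus_shared kraus_shared"
    using arg_cong[OF sandwich_trace_bob_average[OF bob_twirl_y0, of N M R], of Re]
    unfolding y_weight_def bob_weight_def by (simp add: sum.distrib)
  moreover have "2 * y_weight N M R True = ?S kraus_shared kraus_shared + ?S kraus_y1 kraus_y1"
    using arg_cong[OF sandwich_trace_bob_average[OF bob_twirl_y1, of N M R], of Re]
    unfolding y_weight_def bob_weight_def by (simp add: sum.distrib)
  moreover have "2 * parity_weight N M R False = ?X kraus_shared kraus_y0"
    using arg_cong[OF sandwich_trace_bob_average[OF bob_parity_twirl_y0, of N M R], of Re]
    unfolding parity_weight_def bob_weight_def by (simp add: parity_sign_real)
  moreover have "2 * parity_weight N M R True = ?X kraus_shared kraus_y1"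
    using arg_cong[OF sandwich_trace_bob_average[OF bob_parity_twirl_y1, of N M R], of Re]
    unfolding parity_weight_def bob_weight_def by (simp add: parity_sign_real)
  moreover have "(?X kraus_shared kraus_y0 + s * ?X kraus_shared kraus_y1)^2 \<le>
      4 * (?S kraus_shared kraus_shared + ?S kraus_y0 kraus_y0) * (?S kraus_shared kraus_shared + ?S kraus_y1 kraus_y1)"
  proof (rule sq_add_le_four_mult_add)
    show "(?X kraus_shared kraus_y0)^2 \<le> 4 * ?S kraus_shared kraus_shared * ?S kraus_y0 kraus_y0"
      by (intro sandwich_trace_cauchy_schwarz nonneg)
    have "(?X kraus_shared kraus_y1)^2 \<le> 4 * ?S kraus_shared kraus_shared * ?S kraus_y1 kraus_y1"
      by (intro sandwich_trace_cauchy_schwarz nonneg)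
    then show "(s * ?X kraus_shared kraus_y1)^2 \<le> 4 * ?S kraus_shared kraus_shared * ?S kraus_y1 kraus_y1"
      using \<open>s^2 = 1\<close> by (simp add: power_mult_distrib)
  qed (intro sum_nonneg nonneg)+
  ultimately have "(2 * parity_weight N M R False + s * (2 * parity_weight N M R True))^2 \<le>
      4 * (2 * y_weight N M R False) * (2 * y_weight N M R True)"
    by (simp add: add.commute)
  then show ?thesis
    by (simp add: power2_eq_square algebra_simps)
qed

lemma bob_weight_nonneg: "psd (d * 4) M \<Longrightarrow> psd (d * 4) R \<Longrightarrow> 0 \<le> bob_weight (d * 4) M R y h1 h2 p"
  unfolding bob_weight_def using sandwich_trace_nonneg by blast

lemma sum_povm_bob_weight:
  assumes "povm (d * 4) Ms" and "density (d * 4) R"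
  shows "(\<Sum>k<length Ms. bob_weight (d * 4) (Ms ! k) R y h1 h2 p) = 1"
proof -
  have "(\<Sum>k<length Ms. sandwich_trace (d * 4) (Ms ! k) R (bob_matrix y h1 h2 p) (bob_matrix y h1 h2 p)) = 1"
    using assms by (rule sum_povm_sandwich_trace) (simp add: index_bob_unitary bob_entry_isometry)
  then show ?thesis
    unfolding bob_weight_def by (metis Re_sum one_complex.sel(1))
qed

lemma joint_prob_eq_bob_weight:
  assumes "Ms ! out \<in> carrier_mat (dA * 4) (dA * 4)" and "\<rho> \<in> carrier_mat (dA * 4) (dA * 4)"
  shows "joint_prob dA \<rho> Ms (y, h1, h2, p) out = bob_weight (dA * 4) (Ms ! out) \<rho> y h1 h2 p / 16"
  unfolding joint_prob_def bob_weight_def Let_def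
  using mtrace_kron_one_sandwich[OF assms bob_unitary_carrier] by simp

lemma sum_bits_with_stat:
  fixes f :: "bool \<times> bool \<times> bool \<times> bool \<Rightarrow> 'b"
  shows "(\<Sum>\<omega>\<in>{\<omega>. f \<omega> = x}. g \<omega>) = (\<Sum>y\<in>UNIV. \<Sum>h1\<in>UNIV. \<Sum>h2\<in>UNIV. \<Sum>p\<in>UNIV.
     if f (y, h1, h2, p) = x then g (y, h1, h2, p) else (0::'a::comm_monoid_add))"
proof -
  have "(\<Sum>\<omega>\<in>{\<omega>. f \<omega> = x}. g \<omega>) = (\<Sum>\<omega>\<in>UNIV. if f \<omega> = x then g \<omega> else 0)"
    by (simp add: sum.If_cases)
  also have "\<dots> = (\<Sum>y\<in>UNIV. \<Sum>h1\<in>UNIV. \<Sum>h2\<in>UNIV. \<Sum>p\<in>UNIV.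
     if f (y, h1, h2, p) = x then g (y, h1, h2, p) else 0)"
    by (simp add: UNIV_Times_UNIV[symmetric] sum.cartesian_product del: UNIV_Times_UNIV)
  finally show ?thesis .
qed

lemma stat_joint_eq_weights:
  assumes "density (dA * 4) \<rho>" and "povm (dA * 4) Ms" and "out < length Ms"
  defines "A \<equiv> y_weight (dA * 4) (Ms ! out) \<rho>" and "B \<equiv> parity_weight (dA * 4) (Ms ! out) \<rho>"
  shows "stat_joint dA \<rho> Ms bit_y x out = A x / 16"
    and "stat_joint dA \<rho> Ms bit_r x out =
           (A False + A True - (if x then 1 else -1) * (B False + B True)) / 32"
    and "stat_joint dA \<rho> Ms bit_y_xor_r x out =
           (A False + A True - (if x then 1 else -1) * (B False - B True)) / 32"
proof -
  have carriers: "Ms ! out \<in> carrier_mat (dA * 4) (dA * 4)" "\<rho> \<in> carrier_mat (dA * 4) (dA * 4)"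
    using assms(1-3) unfolding povm_def density_def psd_def by auto
  have expand: "stat_joint dA \<rho> Ms f x out = (\<Sum>y\<in>UNIV. \<Sum>h1\<in>UNIV. \<Sum>h2\<in>UNIV. \<Sum>p\<in>UNIV.
      if f (y, h1, h2, p) = x then bob_weight (dA * 4) (Ms ! out) \<rho> y h1 h2 p / 16 else 0)" for f
    unfolding stat_joint_def sum_bits_with_stat by (simp only: joint_prob_eq_bob_weight[OF carriers])
  show "stat_joint dA \<rho> Ms bit_y x out = A x / 16"
    unfolding expand A_def y_weight_def by (cases x) (simp_all add: sum_UNIV_bool bit_y_def add_divide_distrib)
  show "stat_joint dA \<rho> Ms bit_r x out =
           (A False + A True - (if x then 1 else -1) * (B False + B True)) / 32"
    unfolding expand A_def B_def y_weight_def parity_weight_def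
    by (cases x) (simp_all add: sum_UNIV_bool bit_r_def field_simps)
  show "stat_joint dA \<rho> Ms bit_y_xor_r x out =
           (A False + A True - (if x then 1 else -1) * (B False - B True)) / 32"
    unfolding expand A_def B_def y_weight_def parity_weight_def
    by (cases x) (simp_all add: sum_UNIV_bool bit_y_xor_r_def field_simps)
qed

lemma joint_prob_nonneg:
  assumes "density (dA * 4) \<rho>" and "povm (dA * 4) Ms" and "out < length Ms"
  shows "0 \<le> joint_prob dA \<rho> Ms \<omega> out"
proof -
  have "psd (dA * 4) \<rho>" "psd (dA * 4) (Ms ! out)"
    using assms unfolding density_def povm_def by auto
  moreover obtain y h1 h2 p where "\<omega> = (y, h1, h2, p)"
    by (cases \<omega>) auto
  ultimately show ?thesis
    by (simp add: joint_prob_eq_bob_weight psd_def bob_weight_nonneg)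
qed

lemma info_y_add_parity_info_le_one:
  fixes s :: real
  assumes "density (dA * 4) \<rho>" and "povm (dA * 4) Ms" and "s^2 = 1"
  defines "A \<equiv> \<lambda>out. y_weight (dA * 4) (Ms ! out) \<rho>"
    and "B \<equiv> \<lambda>out. parity_weight (dA * 4) (Ms ! out) \<rho>"
  assumes parity_stat: "\<And>x out. out < length Ms \<Longrightarrow> stat_joint dA \<rho> Ms f x out =
    (A out False + A out True - (if x then 1 else -1) * (B out False + s * B out True)) / 32"
  shows "info_of dA \<rho> Ms bit_y + info_of dA \<rho> Ms f \<le> 1"
  unfolding info_of_def
proof (rule mutual_info_pair_le_one)
  have y_stat: "stat_joint dA \<rho> Ms bit_y x out = A out x / 16" if "out < length Ms" for x out
    unfolding A_def using stat_joint_eq_weights(1)[OF assms(1,2) that] .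
  have "(\<Sum>out<length Ms. A out y) = 8" "(\<Sum>out<length Ms. B out y) = 0" for y
    unfolding A_def B_def y_weight_def parity_weight_def
    using sum_povm_bob_weight[OF assms(2,1)]
    by (simp_all add: sum_UNIV_bool sum.distrib sum_negf sum_subtractf flip: sum_distrib_left)
  then show "(\<Sum>out<length Ms. stat_joint dA \<rho> Ms bit_y x out) = 1/2"
    and "(\<Sum>out<length Ms. stat_joint dA \<rho> Ms f x out) = 1/2" for x
    by (simp_all add: y_stat parity_stat sum_divide_distrib[symmetric] sum.distrib sum_subtractf
        flip: sum_distrib_left)
  show "0 \<le> stat_joint dA \<rho> Ms bit_y x out" "0 \<le> stat_joint dA \<rho> Ms f x out"
    if "out \<in> {..<length Ms}" for x out
    using that joint_prob_nonneg[OF assms(1,2)] unfolding stat_joint_def by (simp_all add: sum_nonneg)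
  fix out assume "out \<in> {..<length Ms}"
  then show "stat_joint dA \<rho> Ms f True out + stat_joint dA \<rho> Ms f False out =
             stat_joint dA \<rho> Ms bit_y True out + stat_joint dA \<rho> Ms bit_y False out"
    by (simp add: y_stat parity_stat field_simps)
  have "psd (dA * 4) (Ms ! out)" "psd (dA * 4) \<rho>"
    using assms(1,2) \<open>out \<in> {..<length Ms}\<close> unfolding density_def povm_def by auto
  then have "(B out False + s * B out True)^2 \<le> 4 * A out False * A out True"
    unfolding A_def B_def by (intro parity_weight_bound[OF sandwich_trace_nonneg \<open>s^2 = 1\<close>])
  then show "(stat_joint dA \<rho> Ms bit_y True out - stat_joint dA \<rho> Ms bit_y False out)^2 +
             (stat_joint dA \<rho> Ms f True out - stat_joint dA \<rho> Ms f False out)^2 \<le>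
             (stat_joint dA \<rho> Ms bit_y True out + stat_joint dA \<rho> Ms bit_y False out)^2"
    using \<open>out \<in> {..<length Ms}\<close> by (simp add: y_stat parity_stat power2_eq_square field_simps)
qed

theorem proposition1:
  fixes dA :: nat and \<rho> :: "complex mat" and Ms :: "complex mat list"
  assumes "dA \<ge> 1"
    and "density (dA * 4) \<rho>"
    and "povm (dA * 4) Ms"
  shows "info_of dA \<rho> Ms bit_y + info_of dA \<rho> Ms bit_r \<le> 1 \<and>
         info_of dA \<rho> Ms bit_y + info_of dA \<rho> Ms bit_y_xor_r \<le> 1 \<and>
         info_of dA \<rho> Ms bit_y + max (info_of dA \<rho> Ms bit_r) (info_of dA \<rho> Ms bit_y_xor_r) \<le> 1"
proof -
  have "info_of dA \<rho> Ms bit_y + info_of dA \<rho> Ms bit_r \<le> 1"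
    by (rule info_y_add_parity_info_le_one[where s = 1])
       (simp_all add: assms(2,3) stat_joint_eq_weights(2)[OF assms(2,3)])
  moreover have "info_of dA \<rho> Ms bit_y + info_of dA \<rho> Ms bit_y_xor_r \<le> 1"
    by (rule info_y_add_parity_info_le_one[where s = "-1"])
       (simp_all add: assms(2,3) stat_joint_eq_weights(3)[OF assms(2,3)])
  ultimately show ?thesis
    by simp
qed

end
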